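(* Let $G$ be a finite abelian group, $\Phi$ a normalized $3$-cocycle on $G$, and suppose $\{g_1,\dots,g_n\}\subseteq G$ generates $G$ and $\widetilde{\Phi}_{g_i}(g_j,g_k)=\widetilde{\Phi}_{g_i}(g_k,g_j)$ for all $1\le i,j,k\le n$. Then $\Phi$ is an abelian $3$-cocycle on $G$.
   Context: $\mathbbm{k}$ is algebraically closed of characteristic zero; $\Phi$ takes values in $\mathbbm{k}^*$. For $g\in G$, $\widetilde{\Phi}_g(x,y)=\frac{\Phi(g,x,y)\Phi(x,y,g)}{\Phi(x,g,y)}$. The category ${}^{\mathbbm{k}G}_{\mathbbm{k}G}\mathcal{YD}^{\Phi}$ has objects the $G$-graded vector spaces $V=\bigoplus_gV_g$ with operators $e\triangleright-$ preserving each $V_g$, $1\triangleright v=v$, $e\triangleright(f\triangleright v)=\widetilde{\Phi}_g(e,f)(ef)\triangleright v$ for $v\in V_g$. $\Phi$ is abelian if every simple object of ${}^{\mathbbm{k}G}_{\mathbbm{k}G}\mathcal{YD}^{\Phi}$ is $1$-dimensional. *)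

theory Defs
  imports Complex_Main "HOL-Algebra.Generated_Groups" "HOL-Computational_Algebra.Polynomial"
begin

definition alg_closed :: "'k::field itself \<Rightarrow> bool" where
  "alg_closed _ \<longleftrightarrow> (\<forall>p :: 'k poly. degree p \<ge> 1 \<longrightarrow> (\<exists>x. poly p x = 0))"

definition normalized_3cocycle ::
  "('g, 'b) monoid_scheme \<Rightarrow> ('g \<Rightarrow> 'g \<Rightarrow> 'g \<Rightarrow> 'k::field) \<Rightarrow> bool" where
  "normalized_3cocycle G \<Phi> \<longleftrightarrow>
     (\<forall>x\<in>carrier G. \<forall>y\<in>carrier G. \<forall>z\<in>carrier G. \<Phi> x y z \<noteq> 0) \<and>
     (\<forall>e\<in>carrier G. \<forall>f\<in>carrier G. \<forall>g\<in>carrier G. \<forall>h\<in>carrier G.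
        \<Phi> (e \<otimes>\<^bsub>G\<^esub> f) g h * \<Phi> e f (g \<otimes>\<^bsub>G\<^esub> h)
        = \<Phi> e f g * \<Phi> e (f \<otimes>\<^bsub>G\<^esub> g) h * \<Phi> f g h) \<and>
     (\<forall>x\<in>carrier G. \<forall>y\<in>carrier G.
        \<Phi> \<one>\<^bsub>G\<^esub> x y = 1 \<and> \<Phi> x \<one>\<^bsub>G\<^esub> y = 1 \<and> \<Phi> x y \<one>\<^bsub>G\<^esub> = 1)"

definition tPhi :: "('g, 'b) monoid_scheme \<Rightarrow> ('g \<Rightarrow> 'g \<Rightarrow> 'g \<Rightarrow> 'k::field) \<Rightarrow> 'g \<Rightarrow> 'g \<Rightarrow> 'g \<Rightarrow> 'k" where
  "tPhi G \<Phi> g x y = \<Phi> g x y * \<Phi> x y g / \<Phi> x g y"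

text \<open>Internal direct sum of the graded pieces Vg g (g in G) inside an ambient
  k-vector space given by scale.\<close>
definition graded_sum ::
  "('g, 'b) monoid_scheme \<Rightarrow> ('g \<Rightarrow> 'v::ab_group_add set) \<Rightarrow> 'v set" where
  "graded_sum G Vg = {(\<Sum>g\<in>carrier G. f g) | f. \<forall>g\<in>carrier G. f g \<in> Vg g}"

definition graded_independent ::
  "('g, 'b) monoid_scheme \<Rightarrow> ('g \<Rightarrow> 'v::ab_group_add set) \<Rightarrow> bool" where
  "graded_independent G Vg \<longleftrightarrow>
     (\<forall>f. (\<forall>g\<in>carrier G. f g \<in> Vg g) \<longrightarrow> (\<Sum>g\<in>carrier G. f g) = 0 \<longrightarrow> (\<forall>g\<in>carrier G. f g = 0))"

text \<open>An object of the category of Yetter-Drinfeld modules over kG twisted by Phi: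
  a G-graded vector space V = direct sum of Vg g, with linear operators act e preserving
  each Vg g, act 1 = id, and act e (act f v) = tPhi_g(e,f) (act (ef) v) for v in Vg g.\<close>
definition yd_obj ::
  "('k::field \<Rightarrow> 'v::ab_group_add \<Rightarrow> 'v) \<Rightarrow> ('g, 'b) monoid_scheme \<Rightarrow> ('g \<Rightarrow> 'g \<Rightarrow> 'g \<Rightarrow> 'k)
    \<Rightarrow> 'v set \<Rightarrow> ('g \<Rightarrow> 'v set) \<Rightarrow> ('g \<Rightarrow> 'v \<Rightarrow> 'v) \<Rightarrow> bool" where
  "yd_obj scale G \<Phi> V Vg act \<longleftrightarrow>
     (\<forall>g\<in>carrier G. module.subspace scale (Vg g)) \<and>
     V = graded_sum G Vg \<and> graded_independent G Vg \<and>
     (\<forall>e\<in>carrier G. \<forall>x\<in>V. \<forall>y\<in>V. act e (x + y) = act e x + act e y) \<and>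
     (\<forall>e\<in>carrier G. \<forall>c. \<forall>x\<in>V. act e (scale c x) = scale c (act e x)) \<and>
     (\<forall>e\<in>carrier G. \<forall>g\<in>carrier G. \<forall>v\<in>Vg g. act e v \<in> Vg g) \<and>
     (\<forall>v\<in>V. act \<one>\<^bsub>G\<^esub> v = v) \<and>
     (\<forall>g\<in>carrier G. \<forall>e\<in>carrier G. \<forall>f\<in>carrier G. \<forall>v\<in>Vg g.
        act e (act f v) = scale (tPhi G \<Phi> g e f) (act (e \<otimes>\<^bsub>G\<^esub> f) v))"

definition yd_subobj ::
  "('k::field \<Rightarrow> 'v::ab_group_add \<Rightarrow> 'v) \<Rightarrow> ('g, 'b) monoid_scheme
    \<Rightarrow> 'v set \<Rightarrow> ('g \<Rightarrow> 'v set) \<Rightarrow> ('g \<Rightarrow> 'v \<Rightarrow> 'v) \<Rightarrow> 'v set \<Rightarrow> bool" where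
  "yd_subobj scale G V Vg act W \<longleftrightarrow>
     module.subspace scale W \<and> W \<subseteq> V \<and>
     W = graded_sum G (\<lambda>g. W \<inter> Vg g) \<and>
     (\<forall>e\<in>carrier G. \<forall>w\<in>W. act e w \<in> W)"

definition yd_simple ::
  "('k::field \<Rightarrow> 'v::ab_group_add \<Rightarrow> 'v) \<Rightarrow> ('g, 'b) monoid_scheme \<Rightarrow> ('g \<Rightarrow> 'g \<Rightarrow> 'g \<Rightarrow> 'k)
    \<Rightarrow> 'v set \<Rightarrow> ('g \<Rightarrow> 'v set) \<Rightarrow> ('g \<Rightarrow> 'v \<Rightarrow> 'v) \<Rightarrow> bool" where
  "yd_simple scale G \<Phi> V Vg act \<longleftrightarrow>
     yd_obj scale G \<Phi> V Vg act \<and> V \<noteq> {0} \<and>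
     (\<forall>W. yd_subobj scale G V Vg act W \<longrightarrow> W = {0} \<or> W = V)"

text \<open>Phi is abelian: every simple object (realised inside the k-vector space given
  by scale) is 1-dimensional.\<close>
definition abelian_cocycle ::
  "('k::field \<Rightarrow> 'v::ab_group_add \<Rightarrow> 'v) \<Rightarrow> ('g, 'b) monoid_scheme \<Rightarrow> ('g \<Rightarrow> 'g \<Rightarrow> 'g \<Rightarrow> 'k) \<Rightarrow> bool" where
  "abelian_cocycle scale G \<Phi> \<longleftrightarrow>
     (\<forall>V Vg act. yd_simple scale G \<Phi> V Vg act \<longrightarrow> vector_space.dim scale V = 1)"

end

theory Submission
  imports Defs "HOL-Algebra.Multiplicative_Group"
begin

(* Six instances of the 3-cocycle condition show that, for abelian G, g \<mapsto>
   tPhi_g(x,y) / tPhi_g(y,x) is multiplicative; hence the symmetry assumed on the generators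
   holds for every subscript g. A simple object V is concentrated in one degree g, where G acts
   projectively with multiplier tPhi_g. The generators then act by pairwise commuting operators,
   each with a power that is a scalar, hence each has an eigenvector; its eigenspace is stable
   under all generators, hence a subobject, hence all of V. So the generators act by scalars,
   every line is a subobject, and V is 1-dimensional. *)

lemma normalized_3cocycle_nonzero:
  assumes "normalized_3cocycle G \<Phi>" "x \<in> carrier G" "y \<in> carrier G" "z \<in> carrier G"
  shows "\<Phi> x y z \<noteq> 0"
  using assms unfolding normalized_3cocycle_def by blast

lemma normalized_3cocycle_eq:
  assumes "normalized_3cocycle G \<Phi>"
    and "e \<in> carrier G" "f \<in> carrier G" "k \<in> carrier G" "l \<in> carrier G"
  shows "\<Phi> (e \<otimes>\<^bsub>G\<^esub> f) k l * \<Phi> e f (k \<otimes>\<^bsub>G\<^esub> l)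
       = \<Phi> e f k * \<Phi> e (f \<otimes>\<^bsub>G\<^esub> k) l * \<Phi> f k l"
  using assms unfolding normalized_3cocycle_def by blast

lemma tPhi_nonzero:
  assumes "normalized_3cocycle G \<Phi>" "g \<in> carrier G" "x \<in> carrier G" "y \<in> carrier G"
  shows "tPhi G \<Phi> g x y \<noteq> 0"
  using assms by (simp add: tPhi_def normalized_3cocycle_nonzero)

lemma tPhi_one:
  assumes "normalized_3cocycle G \<Phi>" "x \<in> carrier G" "y \<in> carrier G"
  shows "tPhi G \<Phi> \<one>\<^bsub>G\<^esub> x y = 1"
  using assms unfolding normalized_3cocycle_def tPhi_def by simp

lemma (in comm_group) tPhi_quasi_bicharacter:
  fixes \<Phi> :: "'a \<Rightarrow> 'a \<Rightarrow> 'a \<Rightarrow> 'k::field"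
  assumes \<Phi>: "normalized_3cocycle G \<Phi>"
    and g: "g \<in> carrier G" and h: "h \<in> carrier G" and x: "x \<in> carrier G" and y: "y \<in> carrier G"
  shows "tPhi G \<Phi> g x y * tPhi G \<Phi> h x y * tPhi G \<Phi> x g h * tPhi G \<Phi> y g h
       = tPhi G \<Phi> (g \<otimes> h) x y * tPhi G \<Phi> (x \<otimes> y) g h"
proof -
  \<comment> \<open>\<open>\<delta>\<close> is the defect of the cocycle condition; the claim is a product of six of its instances.\<close>
  define \<delta> where "\<delta> e f k l = \<Phi> (e \<otimes> f) k l * \<Phi> e f (k \<otimes> l)
    / (\<Phi> e f k * \<Phi> e (f \<otimes> k) l * \<Phi> f k l)" for e f k l
  have \<delta>_one: "\<delta> e f k l = 1"
    if "e \<in> carrier G" "f \<in> carrier G" "k \<in> carrier G" "l \<in> carrier G" for e f k l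
    using that normalized_3cocycle_eq[OF \<Phi>] normalized_3cocycle_nonzero[OF \<Phi>]
    by (simp add: \<delta>_def)
  have "tPhi G \<Phi> g x y * tPhi G \<Phi> h x y * tPhi G \<Phi> x g h * tPhi G \<Phi> y g h
      = tPhi G \<Phi> (g \<otimes> h) x y * tPhi G \<Phi> (x \<otimes> y) g h
        * (\<delta> g x h y * \<delta> x g y h) / (\<delta> g h x y * \<delta> g x y h * \<delta> x g h y * \<delta> x y g h)"
    unfolding \<delta>_def tPhi_def using g h x y
    by (simp add: normalized_3cocycle_nonzero[OF \<Phi>] m_comm[of x g] m_comm[of y g] m_comm[of y h]
        m_comm[of y x] m_comm[of x h] field_simps)
  then show ?thesis
    using g h x y by (simp add: \<delta>_one)
qed

lemma (in comm_group) tPhi_swap_mult: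
  fixes \<Phi> :: "'a \<Rightarrow> 'a \<Rightarrow> 'a \<Rightarrow> 'k::field"
  assumes \<Phi>: "normalized_3cocycle G \<Phi>"
    and g: "g \<in> carrier G" and h: "h \<in> carrier G" and x: "x \<in> carrier G" and y: "y \<in> carrier G"
  shows "tPhi G \<Phi> (g \<otimes> h) x y * tPhi G \<Phi> g y x * tPhi G \<Phi> h y x
       = tPhi G \<Phi> (g \<otimes> h) y x * tPhi G \<Phi> g x y * tPhi G \<Phi> h x y"
proof -
  let ?P = "tPhi G \<Phi> x g h * tPhi G \<Phi> y g h"
  have "(tPhi G \<Phi> (g \<otimes> h) x y * tPhi G \<Phi> g y x * tPhi G \<Phi> h y x) * ?P
      = tPhi G \<Phi> (g \<otimes> h) x y * tPhi G \<Phi> (g \<otimes> h) y x * tPhi G \<Phi> (x \<otimes> y) g h"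
    using tPhi_quasi_bicharacter[OF \<Phi> g h y x] by (simp add: m_comm[OF y x] mult_ac)
  also have "\<dots> = (tPhi G \<Phi> (g \<otimes> h) y x * tPhi G \<Phi> g x y * tPhi G \<Phi> h x y) * ?P"
    using tPhi_quasi_bicharacter[OF \<Phi> g h x y] by (simp add: mult_ac)
  finally show ?thesis
    using g h x y by (simp add: tPhi_nonzero[OF \<Phi>])
qed

lemma (in comm_group) tPhi_symmetric_subgroup:
  fixes \<Phi> :: "'a \<Rightarrow> 'a \<Rightarrow> 'a \<Rightarrow> 'k::field"
  assumes \<Phi>: "normalized_3cocycle G \<Phi>" and x: "x \<in> carrier G" and y: "y \<in> carrier G"
  shows "subgroup {g \<in> carrier G. tPhi G \<Phi> g x y = tPhi G \<Phi> g y x} G"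
proof (rule subgroupI)
  fix g assume "g \<in> {g \<in> carrier G. tPhi G \<Phi> g x y = tPhi G \<Phi> g y x}"
  then have g: "g \<in> carrier G" and sym: "tPhi G \<Phi> g x y = tPhi G \<Phi> g y x" by auto
  show "inv g \<in> {g \<in> carrier G. tPhi G \<Phi> g x y = tPhi G \<Phi> g y x}"
    using tPhi_swap_mult[OF \<Phi> g inv_closed[OF g] x y] g x y sym
    by (simp add: tPhi_one[OF \<Phi>] tPhi_nonzero[OF \<Phi>])
next
  fix g h assume "g \<in> {g \<in> carrier G. tPhi G \<Phi> g x y = tPhi G \<Phi> g y x}"
    and "h \<in> {g \<in> carrier G. tPhi G \<Phi> g x y = tPhi G \<Phi> g y x}"
  then show "g \<otimes> h \<in> {g \<in> carrier G. tPhi G \<Phi> g x y = tPhi G \<Phi> g y x}"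
    using tPhi_swap_mult[OF \<Phi> _ _ x y, of g h] x y by (auto simp: tPhi_nonzero[OF \<Phi>])
qed (use x y tPhi_one[OF \<Phi>] in auto)

lemma (in comm_group) tPhi_symmetric_on_generated:
  fixes \<Phi> :: "'a \<Rightarrow> 'a \<Rightarrow> 'a \<Rightarrow> 'k::field"
  assumes \<Phi>: "normalized_3cocycle G \<Phi>" and S: "S \<subseteq> carrier G"
    and sym: "\<forall>a\<in>S. \<forall>b\<in>S. \<forall>c\<in>S. tPhi G \<Phi> a b c = tPhi G \<Phi> a c b"
    and k: "k \<in> generate G S" and a: "a \<in> S" and b: "b \<in> S"
  shows "tPhi G \<Phi> k a b = tPhi G \<Phi> k b a"
proof -
  have "generate G S \<subseteq> {g \<in> carrier G. tPhi G \<Phi> g a b = tPhi G \<Phi> g b a}"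
    using S sym a b by (intro generate_subgroup_incl tPhi_symmetric_subgroup[OF \<Phi>]) auto
  then show ?thesis using k by blast
qed

locale linear_operator_on = VS: vector_space scale
  for scale :: "'k::field \<Rightarrow> 'v::ab_group_add \<Rightarrow> 'v" +
  fixes V :: "'v set" and T :: "'v \<Rightarrow> 'v"
  assumes subspace_V: "VS.subspace V"
    and T_closed: "v \<in> V \<Longrightarrow> T v \<in> V"
    and T_add: "v \<in> V \<Longrightarrow> w \<in> V \<Longrightarrow> T (v + w) = T v + T w"
    and T_scale: "v \<in> V \<Longrightarrow> T (scale c v) = scale c (T v)"
begin

definition poly_op :: "'k poly \<Rightarrow> 'v \<Rightarrow> 'v" where
  "poly_op p v = (\<Sum>i<Suc (degree p). scale (Polynomial.coeff p i) ((T ^^ i) v))"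

lemma T_pow_closed: "v \<in> V \<Longrightarrow> (T ^^ i) v \<in> V"
  by (induction i) (auto intro: T_closed)

lemma T_zero: "T 0 = 0"
  using T_add[of 0 0] VS.subspace_0[OF subspace_V] by simp

lemma T_sum:
  assumes "finite A" "\<And>i. i \<in> A \<Longrightarrow> u i \<in> V"
  shows "T (sum u A) = (\<Sum>i\<in>A. T (u i))"
  using assms
proof (induction A rule: finite_induct)
  case (insert a A)
  have "sum u A \<in> V"
    using insert by (intro VS.subspace_sum[OF subspace_V]) auto
  with insert show ?case by (simp add: T_add)
qed (simp add: T_zero)

lemma eigenspace_subspace: "VS.subspace {v \<in> V. T v = scale r v}"
proof (rule VS.subspaceI)
  show "0 \<in> {v \<in> V. T v = scale r v}"
    using VS.subspace_0[OF subspace_V] by (simp add: T_zero)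
  show "v + w \<in> {v \<in> V. T v = scale r v}"
    if "v \<in> {v \<in> V. T v = scale r v}" "w \<in> {v \<in> V. T v = scale r v}" for v w
    using that VS.subspace_add[OF subspace_V] by (simp add: T_add VS.scale_right_distrib)
  show "scale c v \<in> {v \<in> V. T v = scale r v}" if "v \<in> {v \<in> V. T v = scale r v}" for c v
    using that VS.subspace_scale[OF subspace_V] by (simp add: T_scale VS.scale_left_commute)
qed

lemma poly_op_eq_sum:
  assumes "degree p < N"
  shows "poly_op p v = (\<Sum>i<N. scale (Polynomial.coeff p i) ((T ^^ i) v))"
  unfolding poly_op_def
  by (rule sum.mono_neutral_left) (use assms in \<open>auto simp: coeff_eq_0\<close>)

lemma poly_op_closed: "v \<in> V \<Longrightarrow> poly_op p v \<in> V"
  unfolding poly_op_def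
  by (intro VS.subspace_sum[OF subspace_V] VS.subspace_scale[OF subspace_V] T_pow_closed)

lemma poly_op_const: "poly_op [:c:] v = scale c v"
  by (simp add: poly_op_def)

lemma poly_op_linear_factor:
  assumes v: "v \<in> V"
  shows "poly_op ([:-r, 1:] * q) v = T (poly_op q v) - scale r (poly_op q v)"
proof -
  define N where "N = Suc (Suc (degree q))"
  have "degree ([:-r, 1:] * q) < N"
    unfolding N_def using degree_mult_le[of "[:-r, 1:]" q] by simp
  then have "poly_op ([:-r, 1:] * q) v = (\<Sum>i<N. scale (Polynomial.coeff ([:-r, 1:] * q) i) ((T ^^ i) v))"
    by (rule poly_op_eq_sum)
  also have "\<dots> = (\<Sum>i<N. scale (- r) (scale (Polynomial.coeff q i) ((T ^^ i) v)))
      + (\<Sum>i<N. scale (Polynomial.coeff (pCons 0 q) i) ((T ^^ i) v))"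
    by (simp add: sum.distrib[symmetric] VS.scale_left_diff_distrib)
  also have "(\<Sum>i<N. scale (- r) (scale (Polynomial.coeff q i) ((T ^^ i) v))) = scale (- r) (poly_op q v)"
    using poly_op_eq_sum[of q N v] by (simp only: N_def VS.scale_sum_right)
  also have "(\<Sum>i<N. scale (Polynomial.coeff (pCons 0 q) i) ((T ^^ i) v))
      = (\<Sum>i<Suc (degree q). T (scale (Polynomial.coeff q i) ((T ^^ i) v)))"
    unfolding N_def by (subst sum.lessThan_Suc_shift) (simp add: T_scale T_pow_closed v)
  also have "\<dots> = T (poly_op q v)"
    unfolding poly_op_def
    by (rule T_sum[symmetric]) (auto intro: VS.subspace_scale[OF subspace_V] T_pow_closed v)
  finally show ?thesis by (simp add: VS.scale_minus_left)
qed

lemma poly_op_monom_minus_const: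
  assumes n: "n \<ge> 1" and v: "v \<in> V"
  shows "poly_op (Polynomial.monom 1 n - [:\<mu>:]) v = (T ^^ n) v - scale \<mu> v"
proof -
  have "degree (Polynomial.monom 1 n - [:\<mu>:]) < Suc n"
    using degree_diff_le_max[of "Polynomial.monom (1::'k) n" "[:\<mu>:]"] by (simp add: degree_monom_eq)
  then have "poly_op (Polynomial.monom 1 n - [:\<mu>:]) v
      = (\<Sum>i<Suc n. scale (Polynomial.coeff (Polynomial.monom 1 n - [:\<mu>:]) i) ((T ^^ i) v))"
    by (rule poly_op_eq_sum)
  also have "\<dots> = (\<Sum>i<Suc n. (if i = n then (T ^^ i) v else 0))
      - (\<Sum>i<Suc n. (if i = 0 then scale \<mu> v else 0))"
    unfolding sum_subtractf[symmetric]
    using n by (intro sum.cong) (auto simp: coeff_pCons' VS.scale_left_diff_distrib)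
  finally show ?thesis by simp
qed

text \<open>No finite dimension is assumed, so the eigenvector comes from an annihilating polynomial
  rather than a characteristic polynomial.\<close>

lemma eigenvector_if_annihilated:
  assumes "alg_closed TYPE('k)" and "V \<noteq> {0}"
    and "p \<noteq> 0" and "\<forall>v\<in>V. poly_op p v = 0"
  shows "\<exists>r. \<exists>v\<in>V. v \<noteq> 0 \<and> T v = scale r v"
  using assms(3,4)
proof (induction "degree p" arbitrary: p rule: less_induct)
  case less
  show ?case
  proof (cases "degree p = 0")
    case True
    then obtain c where "p = [:c:]" and "c \<noteq> 0"
      using less.prems(1) by (metis degree_0_id pCons_0_0)
    moreover obtain v where "v \<in> V" "v \<noteq> 0"
      using assms(2) VS.subspace_0[OF subspace_V] by blast
    ultimately show ?thesis
      using less.prems(2) by (auto simp: poly_op_const)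
  next
    case False
    then obtain r where "poly p r = 0"
      using assms(1) unfolding alg_closed_def by (metis One_nat_def less_one not_le)
    then obtain q where pq: "p = [:-r, 1:] * q"
      by (metis dvdE poly_eq_0_iff_dvd)
    have "q \<noteq> 0" using less.prems(1) pq by auto
    then have deg: "degree q < degree p"
      unfolding pq by (subst degree_mult_eq) auto
    show ?thesis
    proof (rule ccontr)
      assume no_eigen: "\<not> ?thesis"
      have "\<forall>v\<in>V. poly_op q v = 0"
      proof
        fix v assume v: "v \<in> V"
        have "T (poly_op q v) = scale r (poly_op q v)"
          using less.prems(2) v poly_op_linear_factor[OF v, of r q] pq by simp
        then show "poly_op q v = 0"
          using no_eigen poly_op_closed[OF v] by blast
      qed
      with less.hyps[OF deg \<open>q \<noteq> 0\<close>] no_eigen show False by blast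
    qed
  qed
qed

lemma eigenvector_if_power_scalar:
  assumes "alg_closed TYPE('k)" and "V \<noteq> {0}"
    and n: "n \<ge> 1" and pow: "\<And>v. v \<in> V \<Longrightarrow> (T ^^ n) v = scale \<mu> v"
  shows "\<exists>r. \<exists>v\<in>V. v \<noteq> 0 \<and> T v = scale r v"
proof (rule eigenvector_if_annihilated[OF assms(1,2)])
  have "Polynomial.coeff (Polynomial.monom 1 n - [:\<mu>:]) n = 1"
    using n by (cases n) auto
  then show "Polynomial.monom 1 n - [:\<mu>:] \<noteq> (0 :: 'k poly)" by (metis coeff_0 zero_neq_one)
  show "\<forall>v\<in>V. poly_op (Polynomial.monom 1 n - [:\<mu>:]) v = 0"
    by (simp add: poly_op_monom_minus_const[OF n] pow)
qed

end

lemma (in group) finite_submonoid_is_subgroup: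
  assumes "finite (carrier G)" and H: "submonoid H G"
  shows "subgroup H G"
proof (rule submonoid_subgroupI[OF H])
  fix a assume a: "a \<in> H"
  then have a_carrier: "a \<in> carrier G"
    using submonoid.subset[OF H] by blast
  have pow_in: "a [^] n \<in> H" for n :: nat
    by (induction n) (use a H in \<open>auto simp: submonoid.one_closed submonoid.m_closed\<close>)
  have "0 < Coset.order G"
    using assms(1) order_gt_0_iff_finite by blast
  then have "a [^] (Coset.order G - 1) \<otimes> a = \<one>"
    using pow_order_eq_1[OF a_carrier] by (metis Suc_diff_1 nat_pow_Suc)
  then have "inv a = a [^] (Coset.order G - 1)"
    using a_carrier by (metis inv_equality nat_pow_closed)
  then show "inv a \<in> H"
    using pow_in by simp
qed

lemma generating_set_subset_carrier: "generate G S = carrier G \<Longrightarrow> S \<subseteq> carrier G"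
  using generate.incl[of _ S G] by blast

locale projective_rep = G: group G + VS: vector_space scale
  for G :: "('g, 'b) monoid_scheme" and scale :: "'k::field \<Rightarrow> 'v::ab_group_add \<Rightarrow> 'v" +
  fixes c :: "'g \<Rightarrow> 'g \<Rightarrow> 'k" and V :: "'v set" and act :: "'g \<Rightarrow> 'v \<Rightarrow> 'v"
  assumes subspace_V: "VS.subspace V"
    and act_closed: "e \<in> carrier G \<Longrightarrow> v \<in> V \<Longrightarrow> act e v \<in> V"
    and act_add: "e \<in> carrier G \<Longrightarrow> v \<in> V \<Longrightarrow> w \<in> V \<Longrightarrow> act e (v + w) = act e v + act e w"
    and act_scale: "e \<in> carrier G \<Longrightarrow> v \<in> V \<Longrightarrow> act e (scale a v) = scale a (act e v)"
    and act_one: "v \<in> V \<Longrightarrow> act \<one>\<^bsub>G\<^esub> v = v"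
    and act_mult: "e \<in> carrier G \<Longrightarrow> f \<in> carrier G \<Longrightarrow> v \<in> V \<Longrightarrow>
      act e (act f v) = scale (c e f) (act (e \<otimes>\<^bsub>G\<^esub> f) v)"
    and multiplier_nonzero: "e \<in> carrier G \<Longrightarrow> f \<in> carrier G \<Longrightarrow> c e f \<noteq> 0"
begin

definition invariant_subspace :: "'v set \<Rightarrow> bool" where
  "invariant_subspace W \<longleftrightarrow> VS.subspace W \<and> W \<subseteq> V \<and> (\<forall>e\<in>carrier G. \<forall>w\<in>W. act e w \<in> W)"

lemma act_linear_operator: "e \<in> carrier G \<Longrightarrow> linear_operator_on scale V (act e)"
  by unfold_locales (auto simp: subspace_V act_closed act_add act_scale)

lemma stabiliser_submonoid:
  assumes W: "VS.subspace W" "W \<subseteq> V"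
  shows "submonoid {e \<in> carrier G. \<forall>w\<in>W. act e w \<in> W} G"
proof
  fix e f
  assume "e \<in> {e \<in> carrier G. \<forall>w\<in>W. act e w \<in> W}" and "f \<in> {e \<in> carrier G. \<forall>w\<in>W. act e w \<in> W}"
  then have e: "e \<in> carrier G" and f: "f \<in> carrier G" and stable: "\<forall>w\<in>W. act e (act f w) \<in> W"
    by auto
  have "act (e \<otimes>\<^bsub>G\<^esub> f) w \<in> W" if w: "w \<in> W" for w
  proof -
    have "act (e \<otimes>\<^bsub>G\<^esub> f) w = scale (inverse (c e f)) (act e (act f w))"
      using act_mult[OF e f] w W(2) multiplier_nonzero[OF e f] by auto
    then show ?thesis
      using stable w VS.subspace_scale[OF W(1)] by simp
  qed
  then show "e \<otimes>\<^bsub>G\<^esub> f \<in> {e \<in> carrier G. \<forall>w\<in>W. act e w \<in> W}"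
    using e f by simp
qed (use W act_one in auto)

lemma invariant_subspace_if_generators_stabilise:
  assumes "finite (carrier G)" and gen: "generate G S = carrier G"
    and W: "VS.subspace W" "W \<subseteq> V" and S: "\<forall>s\<in>S. \<forall>w\<in>W. act s w \<in> W"
  shows "invariant_subspace W"
proof -
  have "S \<subseteq> {e \<in> carrier G. \<forall>w\<in>W. act e w \<in> W}"
    using S generating_set_subset_carrier[OF gen] by blast
  then have "generate G S \<subseteq> {e \<in> carrier G. \<forall>w\<in>W. act e w \<in> W}"
    using G.generate_subgroup_incl G.finite_submonoid_is_subgroup[OF assms(1) stabiliser_submonoid[OF W]]
    by blast
  then show ?thesis
    unfolding invariant_subspace_def gen using W by blast
qed

lemma act_commute:
  assumes a: "a \<in> carrier G" and b: "b \<in> carrier G" and v: "v \<in> V"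
    and "c a b = c b a" and "a \<otimes>\<^bsub>G\<^esub> b = b \<otimes>\<^bsub>G\<^esub> a"
  shows "act a (act b v) = act b (act a v)"
  using act_mult[OF a b v] act_mult[OF b a v] assms(4,5) by simp

lemma act_iterate:
  assumes a: "a \<in> carrier G"
  shows "\<exists>\<mu>. \<forall>v\<in>V. (act a ^^ n) v = scale \<mu> (act (a [^]\<^bsub>G\<^esub> n) v)"
proof (induction n)
  case 0
  show ?case by (rule exI[of _ 1]) (simp add: act_one)
next
  case (Suc n)
  then obtain \<mu> where \<mu>: "\<forall>v\<in>V. (act a ^^ n) v = scale \<mu> (act (a [^]\<^bsub>G\<^esub> n) v)" ..
  have "(act a ^^ Suc n) v = scale (\<mu> * c a (a [^]\<^bsub>G\<^esub> n)) (act (a [^]\<^bsub>G\<^esub> Suc n) v)"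
    if v: "v \<in> V" for v
  proof -
    have "(act a ^^ Suc n) v = scale \<mu> (act a (act (a [^]\<^bsub>G\<^esub> n) v))"
      using \<mu> v a act_scale act_closed by simp
    also have "\<dots> = scale (\<mu> * c a (a [^]\<^bsub>G\<^esub> n)) (act (a \<otimes>\<^bsub>G\<^esub> a [^]\<^bsub>G\<^esub> n) v)"
      using act_mult[OF a _ v, of "a [^]\<^bsub>G\<^esub> n"] a by simp
    also have "a \<otimes>\<^bsub>G\<^esub> a [^]\<^bsub>G\<^esub> n = a [^]\<^bsub>G\<^esub> Suc n"
      by (rule G.nat_pow_Suc2[OF a, symmetric])
    finally show ?thesis .
  qed
  then show ?case by blast
qed

lemma act_has_eigenvector:
  assumes "alg_closed TYPE('k)" and fin: "finite (carrier G)" and "V \<noteq> {0}"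
    and a: "a \<in> carrier G"
  shows "\<exists>r. \<exists>v\<in>V. v \<noteq> 0 \<and> act a v = scale r v"
proof -
  interpret linear_operator_on scale V "act a"
    by (rule act_linear_operator[OF a])
  obtain \<mu> where "\<forall>v\<in>V. (act a ^^ Coset.order G) v = scale \<mu> (act (a [^]\<^bsub>G\<^esub> Coset.order G) v)"
    using act_iterate[OF a] by blast
  then have "(act a ^^ Coset.order G) v = scale \<mu> v" if "v \<in> V" for v
    using that G.pow_order_eq_1[OF a] act_one by simp
  moreover have "Coset.order G \<ge> 1"
    using fin G.order_gt_0_iff_finite by (simp add: Suc_leI)
  ultimately show ?thesis
    using eigenvector_if_power_scalar[OF assms(1,3)] by blast
qed

end

locale irreducible_projective_rep = projective_rep G scale c V act
  for G :: "('g, 'b) monoid_scheme" and scale :: "'k::field \<Rightarrow> 'v::ab_group_add \<Rightarrow> 'v"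
    and c V act +
  assumes nontrivial: "V \<noteq> {0}"
    and irreducible: "invariant_subspace W \<Longrightarrow> W = {0} \<or> W = V"
begin

lemma act_scalar_if_commutes_with_generators:
  assumes "alg_closed TYPE('k)" and fin: "finite (carrier G)" and gen: "generate G S = carrier G"
    and a: "a \<in> carrier G" and comm: "\<forall>s\<in>S. \<forall>v\<in>V. act a (act s v) = act s (act a v)"
  shows "\<exists>r. \<forall>v\<in>V. act a v = scale r v"
proof -
  obtain r v where v: "v \<in> V" "v \<noteq> 0" and eigen: "act a v = scale r v"
    using act_has_eigenvector[OF assms(1) fin nontrivial a] by blast
  define K where "K = {w \<in> V. act a w = scale r w}"
  interpret linear_operator_on scale V "act a"
    by (rule act_linear_operator[OF a])
  have "VS.subspace K"
    unfolding K_def by (rule eigenspace_subspace)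
  moreover have "\<forall>s\<in>S. \<forall>w\<in>K. act s w \<in> K"
  proof (intro ballI)
    fix s w assume s: "s \<in> S" and w: "w \<in> K"
    have s_carrier: "s \<in> carrier G"
      using s generating_set_subset_carrier[OF gen] by blast
    have "act a (act s w) = scale r (act s w)"
      using comm s w act_scale[OF s_carrier] unfolding K_def by auto
    then show "act s w \<in> K"
      using w act_closed[OF s_carrier] unfolding K_def by auto
  qed
  ultimately have "invariant_subspace K"
    using invariant_subspace_if_generators_stabilise[OF fin gen] unfolding K_def by blast
  moreover have "v \<in> K"
    using v eigen unfolding K_def by simp
  ultimately have "K = V"
    using irreducible v by blast
  then show ?thesis
    unfolding K_def by blast
qed

lemma dim_eq_1_if_generators_act_by_scalars:
  assumes fin: "finite (carrier G)" and gen: "generate G S = carrier G"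
    and scalar: "\<forall>s\<in>S. \<exists>r. \<forall>v\<in>V. act s v = scale r v"
  shows "VS.dim V = 1"
proof -
  obtain v where v: "v \<in> V" "v \<noteq> 0"
    using nontrivial VS.subspace_0[OF subspace_V] by blast
  have span_v: "VS.span {v} = range (\<lambda>a. scale a v)"
    by (rule VS.span_singleton)
  have span_sub: "VS.span {v} \<subseteq> V"
    unfolding span_v using v VS.subspace_scale[OF subspace_V] by blast
  have "\<forall>s\<in>S. \<forall>w\<in>VS.span {v}. act s w \<in> VS.span {v}"
  proof (intro ballI)
    fix s w assume "s \<in> S" and w: "w \<in> VS.span {v}"
    then obtain r where "act s w = scale r w"
      using scalar span_sub by blast
    then show "act s w \<in> VS.span {v}"
      using w VS.span_scale by simp
  qed
  then have "invariant_subspace (VS.span {v})"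
    using invariant_subspace_if_generators_stabilise[OF fin gen] span_sub by simp
  moreover have "v \<in> VS.span {v}"
    by (simp add: VS.span_base)
  ultimately have "VS.span {v} = V"
    using irreducible v by blast
  moreover have "VS.dim (VS.span {v}) = card {v}"
    using v by (intro VS.dim_span_eq_card_independent) simp
  ultimately show ?thesis by simp
qed

lemma dim_eq_1:
  assumes "comm_group G" and "alg_closed TYPE('k)" and fin: "finite (carrier G)"
    and gen: "generate G S = carrier G" and sym: "\<forall>a\<in>S. \<forall>b\<in>S. c a b = c b a"
  shows "VS.dim V = 1"
proof (rule dim_eq_1_if_generators_act_by_scalars[OF fin gen], intro ballI)
  interpret comm: comm_group G by (rule assms(1))
  fix a assume "a \<in> S"
  moreover have "S \<subseteq> carrier G"
    by (rule generating_set_subset_carrier[OF gen])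
  ultimately have "\<forall>s\<in>S. \<forall>v\<in>V. act a (act s v) = act s (act a v)"
    using act_commute sym comm.m_comm by (meson subsetD)
  then show "\<exists>r. \<forall>v\<in>V. act a v = scale r v"
    using act_scalar_if_commutes_with_generators[OF assms(2) fin gen] \<open>a \<in> S\<close> \<open>S \<subseteq> carrier G\<close>
    by blast
qed

end

lemma graded_components_disjoint:
  assumes "vector_space scale" and fin: "finite (carrier G)"
    and sub: "\<forall>h\<in>carrier G. module.subspace scale (Vg h)" and ind: "graded_independent G Vg"
    and g: "g \<in> carrier G" and h: "h \<in> carrier G" and "g \<noteq> h"
  shows "Vg g \<inter> Vg h = {0}"
proof -
  interpret vector_space scale by fact
  have "v = 0" if v: "v \<in> Vg g" "v \<in> Vg h" for v
  proof -
    define F where "F k = (if k = g then v else if k = h then - v else 0)" for k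
    have "\<forall>k\<in>carrier G. F k \<in> Vg k"
      unfolding F_def using v sub subspace_0 subspace_neg by auto
    moreover have "(\<Sum>k\<in>carrier G. F k)
        = (\<Sum>k\<in>carrier G. if k = g then v else 0) + (\<Sum>k\<in>carrier G. if k = h then - v else 0)"
      unfolding F_def sum.distrib[symmetric] using \<open>g \<noteq> h\<close> by (intro sum.cong) auto
    then have "(\<Sum>k\<in>carrier G. F k) = 0"
      using fin g h by simp
    ultimately have "F g = 0"
      using ind g unfolding graded_independent_def by blast
    then show ?thesis
      unfolding F_def by simp
  qed
  moreover have "0 \<in> Vg g \<inter> Vg h"
    using sub g h subspace_0 by blast
  ultimately show ?thesis by blast
qed

lemma component_subset_graded_sum:
  assumes fin: "finite (carrier G)" and g: "g \<in> carrier G" and zero: "\<forall>h\<in>carrier G. 0 \<in> Vg h"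
  shows "Vg g \<subseteq> graded_sum G Vg"
proof
  fix v assume v: "v \<in> Vg g"
  have "v = (\<Sum>h\<in>carrier G. if h = g then v else 0)"
    using fin g by simp
  moreover have "\<forall>h\<in>carrier G. (if h = g then v else 0) \<in> Vg h"
    using v zero by auto
  ultimately show "v \<in> graded_sum G Vg"
    unfolding graded_sum_def by blast
qed

lemma graded_sum_within_component:
  assumes vs: "vector_space scale" and fin: "finite (carrier G)"
    and sub: "\<forall>h\<in>carrier G. module.subspace scale (Vg h)" and ind: "graded_independent G Vg"
    and g: "g \<in> carrier G" and W: "W \<subseteq> Vg g" "0 \<in> W"
  shows "graded_sum G (\<lambda>h. W \<inter> Vg h) = W"
proof
  interpret vector_space scale by (rule vs)
  have "0 \<in> Vg h" if "h \<in> carrier G" for h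
    using sub that subspace_0 by blast
  then show "W \<subseteq> graded_sum G (\<lambda>h. W \<inter> Vg h)"
    using component_subset_graded_sum[OF fin g, of "\<lambda>h. W \<inter> Vg h"] W by auto
next
  show "graded_sum G (\<lambda>h. W \<inter> Vg h) \<subseteq> W"
  proof
    fix u assume "u \<in> graded_sum G (\<lambda>h. W \<inter> Vg h)"
    then obtain f where u: "u = (\<Sum>h\<in>carrier G. f h)" and f: "\<forall>h\<in>carrier G. f h \<in> W \<inter> Vg h"
      unfolding graded_sum_def by blast
    have "f h = 0" if "h \<in> carrier G" "h \<noteq> g" for h
      using graded_components_disjoint[OF vs fin sub ind g that(1)] that f W(1) by blast
    then have "u = (\<Sum>h\<in>carrier G. if h = g then f g else 0)"
      unfolding u by (intro sum.cong) auto
    then show "u \<in> W"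
      using f fin g by simp
  qed
qed

lemma yd_simple_concentrated:
  assumes vs: "vector_space scale" and fin: "finite (carrier G)"
    and simple: "yd_simple scale G \<Phi> V Vg act"
  shows "\<exists>g\<in>carrier G. Vg g = V"
proof -
  interpret vector_space scale by (rule vs)
  have obj: "yd_obj scale G \<Phi> V Vg act" and nontrivial: "V \<noteq> {0}"
    and irreducible: "\<And>W. yd_subobj scale G V Vg act W \<Longrightarrow> W = {0} \<or> W = V"
    using simple unfolding yd_simple_def by blast+
  have sub: "\<forall>h\<in>carrier G. subspace (Vg h)" and V: "V = graded_sum G Vg"
    and ind: "graded_independent G Vg"
    and preserve: "\<forall>e\<in>carrier G. \<forall>h\<in>carrier G. \<forall>v\<in>Vg h. act e v \<in> Vg h"
    using obj by (simp_all add: yd_obj_def)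
  have zero: "\<forall>h\<in>carrier G. 0 \<in> Vg h"
    using sub subspace_0 by blast
  obtain g where g: "g \<in> carrier G" and "Vg g \<noteq> {0}"
  proof (rule ccontr)
    assume "\<not> thesis"
    then have "\<forall>h\<in>carrier G. Vg h = {0}"
      using that by blast
    then have "V \<subseteq> {0}"
      unfolding V graded_sum_def by auto
    moreover have "0 \<in> V"
      unfolding V graded_sum_def using zero by (auto intro!: exI[of _ "\<lambda>_. 0"])
    ultimately show False
      using nontrivial by blast
  qed
  moreover have "yd_subobj scale G V Vg act (Vg g)"
    unfolding yd_subobj_def
    using sub g V component_subset_graded_sum[OF fin g zero] preserve zero
      graded_sum_within_component[OF vs fin sub ind g order_refl] by auto
  ultimately show ?thesis
    using irreducible by blast
qed

lemma yd_simple_irreducible_projective_rep: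
  assumes "group G" and vs: "vector_space scale" and fin: "finite (carrier G)"
    and \<Phi>: "normalized_3cocycle G \<Phi>" and simple: "yd_simple scale G \<Phi> V Vg act"
    and g: "g \<in> carrier G" and Vg: "Vg g = V"
  shows "irreducible_projective_rep G scale (tPhi G \<Phi> g) V act"
proof -
  interpret vector_space scale by (rule vs)
  have obj: "yd_obj scale G \<Phi> V Vg act" and nontrivial: "V \<noteq> {0}"
    and irreducible: "\<And>W. yd_subobj scale G V Vg act W \<Longrightarrow> W = {0} \<or> W = V"
    using simple unfolding yd_simple_def by blast+
  have sub: "\<forall>h\<in>carrier G. subspace (Vg h)" and ind: "graded_independent G Vg"
    and additive: "\<forall>e\<in>carrier G. \<forall>x\<in>V. \<forall>y\<in>V. act e (x + y) = act e x + act e y"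
    and homogeneous: "\<forall>e\<in>carrier G. \<forall>c. \<forall>x\<in>V. act e (scale c x) = scale c (act e x)"
    and preserve: "\<forall>e\<in>carrier G. \<forall>h\<in>carrier G. \<forall>v\<in>Vg h. act e v \<in> Vg h"
    and one: "\<forall>v\<in>V. act \<one>\<^bsub>G\<^esub> v = v"
    and mult: "\<forall>h\<in>carrier G. \<forall>e\<in>carrier G. \<forall>f\<in>carrier G. \<forall>v\<in>Vg h.
      act e (act f v) = scale (tPhi G \<Phi> h e f) (act (e \<otimes>\<^bsub>G\<^esub> f) v)"
    using obj by (simp_all add: yd_obj_def)
  interpret projective_rep G scale "tPhi G \<Phi> g" V act
    by (intro projective_rep.intro projective_rep_axioms.intro assms(1) vs)
      (use g Vg sub additive homogeneous preserve one mult tPhi_nonzero[OF \<Phi>] in auto)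
  show ?thesis
  proof (intro irreducible_projective_rep.intro irreducible_projective_rep_axioms.intro
      projective_rep_axioms nontrivial)
    fix W assume W: "invariant_subspace W"
    then have "graded_sum G (\<lambda>h. W \<inter> Vg h) = W"
      using graded_sum_within_component[OF vs fin sub ind g] Vg subspace_0
      unfolding invariant_subspace_def by blast
    then have "yd_subobj scale G V Vg act W"
      using W unfolding invariant_subspace_def yd_subobj_def by blast
    then show "W = {0} \<or> W = V"
      by (rule irreducible)
  qed
qed

theorem lemma4p5:
  fixes G :: "('g, 'b) monoid_scheme"
    and \<Phi> :: "'g \<Rightarrow> 'g \<Rightarrow> 'g \<Rightarrow> 'k::field_char_0"
    and gs :: "'g list"
    and scale :: "'k \<Rightarrow> 'v::ab_group_add \<Rightarrow> 'v"
  assumes "alg_closed TYPE('k)"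
    and "comm_group G" and "finite (carrier G)"
    and "normalized_3cocycle G \<Phi>"
    and "set gs \<subseteq> carrier G" and "generate G (set gs) = carrier G"
    and "\<forall>a\<in>set gs. \<forall>b\<in>set gs. \<forall>c\<in>set gs. tPhi G \<Phi> a b c = tPhi G \<Phi> a c b"
    and "vector_space scale"
  shows "abelian_cocycle scale G \<Phi>"
  unfolding abelian_cocycle_def
proof (intro allI impI)
  interpret G: comm_group G by (rule assms(2))
  fix V Vg act
  assume simple: "yd_simple scale G \<Phi> V Vg act"
  obtain g where g: "g \<in> carrier G" and Vg: "Vg g = V"
    using yd_simple_concentrated[OF assms(8,3) simple] by blast
  interpret irreducible_projective_rep G scale "tPhi G \<Phi> g" V act
    by (rule yd_simple_irreducible_projective_rep[OF G.is_group assms(8,3,4) simple g Vg])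
  have "\<forall>a\<in>set gs. \<forall>b\<in>set gs. tPhi G \<Phi> g a b = tPhi G \<Phi> g b a"
    using G.tPhi_symmetric_on_generated[OF assms(4,5,7)] assms(6) g by blast
  then show "vector_space.dim scale V = 1"
    by (rule dim_eq_1[OF assms(2,1,3,6)])
qed

end
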